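(* For every sequence ${\mathbf s}$ in $\widehat{\mathcal S}$, the inclusion ${\mathcal X}_T({\mathbf s})\subset\bigoplus_{\sigma\in I({\mathbf s})}S_T$ becomes an isomorphism after applying $-\otimes_{S_T}Q_T$.
   Context: $R$ irreducible reduced finite root system (positive roots $R^+$, simple roots $\Pi$, highest root $\gamma$); $\widehat X=X\oplus\mathbb Z$ ($X$ weight lattice), $\delta=(0,-1)$, affine roots $\widehat R=\{\alpha+n\delta:\alpha\in R,n\in\mathbb Z\}$. $\widehat{\mathcal W}$ is generated by $s_{\alpha,n}(v,m)=(v-(\langle\alpha,v\rangle-mn)\alpha^\vee,m)$ and acts contragrediently on $\widehat X$; $\widehat{\mathcal S}=\{s_{\alpha,0}:\alpha\in\Pi\}\cup\{s_{\gamma,1}\}$ with attached simple affine roots $\alpha$ resp. $-\gamma+\delta$. $T$: commutative unital domain, $2$ not a zero divisor, all $\alpha\otimes1$ ($\alpha\in\widehat R$) nonzero in $\widehat X\otimes T$. $S_T$: symmetric algebra of $\widehat X\otimes T$, graded in even degrees. $Q_T=S_T[2^{-1}][\alpha^{-1}:\alpha\in\widehat R]$. For ${\mathbf s}=(s_1,\dots,s_l)$: $I({\mathbf s})$ = strictly increasing tuples in $\{1,\dots,l\}$ (including the empty one), $\operatorname{ev}(i_1,\dots,i_n)=s_{i_1}\cdots s_{i_n}$; ${\mathbf s}'=(s_1,\dots,s_{l-1})$, $I({\mathbf s})=I({\mathbf s}')\sqcup I({\mathbf s}')s_l$ (appending $l$); $\Delta(z)_\gamma=\Delta(z)_{\gamma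 s_l}=z_\gamma$; $c^\lambda$ multiplies the $\sigma$-component by $\operatorname{ev}(\sigma)(\lambda)\otimes1$; $\alpha_l$ the simple affine root of $s_l$. ${\mathcal X}_T(\emptyset)=S_T$, ${\mathcal X}_T({\mathbf s})=\Delta({\mathcal X}_T({\mathbf s}'))+c^{\alpha_l}(\Delta({\mathcal X}_T({\mathbf s}')))\subset\bigoplus_{\sigma\in I({\mathbf s})}S_T$. *)

theory Defs
  imports "HOL-Analysis.Analysis" "HOL-Library.Poly_Mapping"
begin

definition coroot_pair :: "'v::euclidean_space \<Rightarrow> 'v \<Rightarrow> real" where
  "coroot_pair w \<alpha> = 2 * (w \<bullet> \<alpha>) / (\<alpha> \<bullet> \<alpha>)"

definition root_refl :: "'v::euclidean_space \<Rightarrow> 'v \<Rightarrow> 'v" where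
  "root_refl \<alpha> w = w - coroot_pair w \<alpha> *\<^sub>R \<alpha>"

definition root_system :: "'v::euclidean_space set \<Rightarrow> bool" where
  "root_system R \<longleftrightarrow> finite R \<and> 0 \<notin> R \<and> span R = UNIV
     \<and> (\<forall>\<alpha>\<in>R. \<forall>\<beta>\<in>R. root_refl \<alpha> \<beta> \<in> R)
     \<and> (\<forall>\<alpha>\<in>R. \<forall>\<beta>\<in>R. coroot_pair \<beta> \<alpha> \<in> \<int>)"

definition reduced_rs :: "'v::euclidean_space set \<Rightarrow> bool" where
  "reduced_rs R \<longleftrightarrow> (\<forall>\<alpha>\<in>R. \<forall>c::real. c *\<^sub>R \<alpha> \<in> R \<longrightarrow> c = 1 \<or> c = -1)"

definition irreducible_rs :: "'v::euclidean_space set \<Rightarrow> bool" where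
  "irreducible_rs R \<longleftrightarrow> R \<noteq> {} \<and> \<not> (\<exists>A B. A \<noteq> {} \<and> B \<noteq> {} \<and> A \<union> B = R \<and> A \<inter> B = {}
        \<and> (\<forall>a\<in>A. \<forall>b\<in>B. a \<bullet> b = 0))"

definition nonneg_comb :: "'v::euclidean_space set \<Rightarrow> 'v \<Rightarrow> bool" where
  "nonneg_comb B x \<longleftrightarrow> (\<exists>c::'v \<Rightarrow> nat. x = (\<Sum>\<beta>\<in>B. real (c \<beta>) *\<^sub>R \<beta>))"

definition is_base :: "'v::euclidean_space set \<Rightarrow> 'v set \<Rightarrow> bool" where
  "is_base R B \<longleftrightarrow> B \<subseteq> R \<and> independent B \<and>
     (\<forall>\<alpha>\<in>R. nonneg_comb B \<alpha> \<or> nonneg_comb B (- \<alpha>))"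

definition pos_roots :: "'v::euclidean_space set \<Rightarrow> 'v set \<Rightarrow> 'v set" where
  "pos_roots R B = {\<alpha>\<in>R. nonneg_comb B \<alpha>}"

definition highest_root :: "'v::euclidean_space set \<Rightarrow> 'v set \<Rightarrow> 'v \<Rightarrow> bool" where
  "highest_root R B \<gamma> \<longleftrightarrow> \<gamma> \<in> R \<and> (\<forall>\<alpha>\<in>R. nonneg_comb B (\<gamma> - \<alpha>))"

text \<open>Elements of \<open>\<widehat>X\<close> are pairs (lambda, m) with lambda in the weight lattice X
  (a subset of 'v) and m an integer; delta = (0,-1).  On X the coroot pairing is
  integral, so we take the integer it equals.\<close>

definition icop :: "'v::euclidean_space \<Rightarrow> 'v \<Rightarrow> int" where
  "icop w \<alpha> = \<lfloor>coroot_pair w \<alpha>\<rfloor>"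

definition affine_roots :: "'v::euclidean_space set \<Rightarrow> ('v \<times> int) set" where
  "affine_roots R = {(\<alpha>, - n) | \<alpha> n. \<alpha> \<in> R}"   (* alpha + n delta = (alpha, -n) *)

definition aff_refl :: "'v::euclidean_space \<Rightarrow> int \<Rightarrow> 'v \<times> int \<Rightarrow> 'v \<times> int" where
  "aff_refl \<alpha> n x = (fst x - of_int (icop (fst x) \<alpha>) *\<^sub>R \<alpha>, snd x - n * icop (fst x) \<alpha>)"

text \<open>Elements of \<open>\<widehat>S\<close> are labelled by \<open>'v option\<close>: Some alpha (alpha simple) stands for
  \<open>s_{\<alpha>,0}\<close>, None stands for \<open>s_{\<gamma>,1}\<close>.\<close>
definition simple_labels :: "'v set \<Rightarrow> 'v option set" where
  "simple_labels B = Some ` B \<union> {None}"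

fun lab_refl :: "'v::euclidean_space \<Rightarrow> 'v option \<Rightarrow> 'v \<times> int \<Rightarrow> 'v \<times> int" where
  "lab_refl \<gamma> (Some \<alpha>) = aff_refl \<alpha> 0"
| "lab_refl \<gamma> None = aff_refl \<gamma> 1"

fun lab_root :: "'v::euclidean_space \<Rightarrow> 'v option \<Rightarrow> 'v \<times> int" where
  "lab_root \<gamma> (Some \<alpha>) = (\<alpha>, 0)"
| "lab_root \<gamma> None = (- \<gamma>, -1)"     (* -gamma + delta *)

text \<open>Via the canonical isomorphism \<open>\<widehat>X \<otimes> T \<cong> T^\<Pi> \<oplus> T\<close>,
  \<open>(\<lambda>,m)\<otimes>t \<mapsto> ((\<langle>\<lambda>,\<alpha>\<^sup>\<or>\<rangle> t)_{\<alpha>\<in>\<Pi>}, m t)\<close>, the symmetric algebra \<open>S_T\<close> is the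
  polynomial ring over T in variables indexed by \<open>'v option\<close> (Some alpha for alpha in Pi,
  None for the Z-summand).\<close>

type_synonym ('v, 'a) symalg = "('v option \<Rightarrow>\<^sub>0 nat) \<Rightarrow>\<^sub>0 'a"

definition pvar :: "'v option \<Rightarrow> ('v, 'a::comm_ring_1) symalg" where
  "pvar i = Poly_Mapping.single (Poly_Mapping.single i 1) 1"

definition pconst :: "'a::comm_ring_1 \<Rightarrow> ('v, 'a) symalg" where
  "pconst c = Poly_Mapping.single 0 c"

definition lin :: "'v::euclidean_space set \<Rightarrow> 'v \<times> int \<Rightarrow> ('v, 'a::comm_ring_1) symalg" where
  "lin B x = (\<Sum>\<beta>\<in>B. of_int (icop (fst x) \<beta>) * pvar (Some \<beta>)) + of_int (snd x) * pvar None"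

text \<open>Multiplicative set generated by 2 and the \<open>\<alpha>\<otimes>1\<close>, \<open>\<alpha>\<in>\<widehat>R\<close>; \<open>Q_T = U^{-1} S_T\<close>.\<close>
inductive_set denoms :: "'v::euclidean_space set \<Rightarrow> 'v set \<Rightarrow> ('v, 'a::comm_ring_1) symalg set"
  for R B where
  one: "1 \<in> denoms R B"
| two: "u \<in> denoms R B \<Longrightarrow> 2 * u \<in> denoms R B"
| root: "u \<in> denoms R B \<Longrightarrow> a \<in> affine_roots R \<Longrightarrow> lin B a * u \<in> denoms R B"

definition Iset :: "nat \<Rightarrow> nat list set" where
  "Iset l = {\<sigma>. sorted_wrt (<) \<sigma> \<and> set \<sigma> \<subseteq> {1..l}}"

definition ev :: "'v::euclidean_space \<Rightarrow> 'v option list \<Rightarrow> nat list \<Rightarrow> 'v \<times> int \<Rightarrow> 'v \<times> int" where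
  "ev \<gamma> s \<sigma> x = foldr (\<lambda>i y. lab_refl \<gamma> (s ! (i - 1)) y) \<sigma> x"

definition dirsum :: "nat \<Rightarrow> (nat list \<Rightarrow> ('v, 'a::comm_ring_1) symalg) set" where
  "dirsum l = {f. \<forall>\<sigma>. \<sigma> \<notin> Iset l \<longrightarrow> f \<sigma> = 0}"

text \<open>Delta from \<open>\<Oplus>_{I(s')}\<close> to \<open>\<Oplus>_{I(s)}\<close> where l = length s.\<close>
definition Delta :: "nat \<Rightarrow> (nat list \<Rightarrow> ('v, 'a::comm_ring_1) symalg) \<Rightarrow> nat list \<Rightarrow> ('v, 'a) symalg" where
  "Delta l z \<sigma> = (if \<sigma> \<in> Iset l then (if \<sigma> \<noteq> [] \<and> last \<sigma> = l then z (butlast \<sigma>) else z \<sigma>) else 0)"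

definition cmul :: "'v::euclidean_space set \<Rightarrow> 'v \<Rightarrow> 'v option list \<Rightarrow> 'v \<times> int
    \<Rightarrow> (nat list \<Rightarrow> ('v, 'a::comm_ring_1) symalg) \<Rightarrow> nat list \<Rightarrow> ('v, 'a) symalg" where
  "cmul B \<gamma> s w f \<sigma> = lin B (ev \<gamma> s \<sigma> w) * f \<sigma>"

fun Xrev :: "'v::euclidean_space set \<Rightarrow> 'v \<Rightarrow> 'v option list \<Rightarrow> (nat list \<Rightarrow> ('v, 'a::comm_ring_1) symalg) set" where
  "Xrev B \<gamma> [] = {f. \<forall>\<sigma>. \<sigma> \<noteq> [] \<longrightarrow> f \<sigma> = 0}"
| "Xrev B \<gamma> (t # rs) =
     (let s = rev (t # rs); l = length s in
      {(\<lambda>\<sigma>. Delta l z \<sigma> + cmul B \<gamma> s (lab_root \<gamma> t) (Delta l z') \<sigma>) | z z'.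
          z \<in> Xrev B \<gamma> rs \<and> z' \<in> Xrev B \<gamma> rs})"

definition Xmod :: "'v::euclidean_space set \<Rightarrow> 'v \<Rightarrow> 'v option list \<Rightarrow> (nat list \<Rightarrow> ('v, 'a::comm_ring_1) symalg) set" where
  "Xmod B \<gamma> s = Xrev B \<gamma> (rev s)"

text \<open>The inclusion \<open>M \<subseteq> \<Oplus>_{\<sigma>\<in>I} S_T\<close> becomes an isomorphism after \<open>- \<otimes>_{S_T} Q_T\<close>,
  where \<open>Q_T = U^{-1}S_T\<close>, so \<open>M \<otimes>_{S_T} Q_T = U^{-1}M\<close>.  Fractions m/u (m in M) and
  f/v (f in the direct sum) agree iff \<open>t(vm - uf) = 0\<close> for some t in U.
  Injectivity of \<open>U^{-1}M \<rightarrow> U^{-1}(\<Oplus> S_T)\<close> holds by exactness of localization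
  (it is literally the identity on fraction representatives), so the content is surjectivity:\<close>
definition loc_iso :: "('b::comm_ring_1) set \<Rightarrow> ('i \<Rightarrow> 'b) set \<Rightarrow> ('i \<Rightarrow> 'b) set \<Rightarrow> bool" where
  "loc_iso U M D \<longleftrightarrow> M \<subseteq> D \<and>
     (\<forall>f\<in>D. \<forall>v\<in>U. \<exists>m\<in>M. \<exists>u\<in>U. \<exists>t\<in>U. \<forall>\<sigma>. t * (v * m \<sigma> - u * f \<sigma>) = 0)"

end

theory Submission
  imports Defs
begin

text \<open>Put \<open>a\<^sub>\<tau> = ev(\<tau>)(\<alpha>\<^sub>l) \<otimes> 1\<close>.  Since \<open>s\<^sub>l\<close> sends \<open>\<alpha>\<^sub>l\<close> to
  \<open>-\<alpha>\<^sub>l\<close>, we have \<open>ev(\<tau> s\<^sub>l)(\<alpha>\<^sub>l) = -ev(\<tau>)(\<alpha>\<^sub>l)\<close>, so in the coordinates \<open>(\<tau>, \<tau> s\<^sub>l)\<close> the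
  element \<open>\<Delta>(z) + c\<^sup>\<alpha>\<^sup>\<^sub>l(\<Delta>(z'))\<close> reads \<open>(z\<^sub>\<tau> + a\<^sub>\<tau> z'\<^sub>\<tau>, z\<^sub>\<tau> - a\<^sub>\<tau> z'\<^sub>\<tau>)\<close>.  This system
  has determinant \<open>-2a\<^sub>\<tau>\<close>, so for \<open>P = \<Prod>\<^sub>\<tau> a\<^sub>\<tau>\<close> and any \<open>f\<close> in the direct sum, \<open>2P f\<close> is
  of this form for explicit \<open>z, z'\<close>; by induction, multiples of \<open>z\<close> and \<open>z'\<close> by products of
  \<open>2\<close> and affine roots lie in \<open>\<X>\<^sub>T(s')\<close>.  Hence every element of the direct sum becomes, after
  multiplication by such a unit of \<open>Q\<^sub>T\<close>, an element of \<open>\<X>\<^sub>T(s)\<close>.\<close>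

lemma icop_uminus: "coroot_pair w a \<in> \<int> \<Longrightarrow> icop (- w) a = - icop w a"
  by (auto simp: icop_def coroot_pair_def elim!: Ints_cases)

lemma of_int_icop: "coroot_pair w a \<in> \<int> \<Longrightarrow> (of_int (icop w a) :: real) = coroot_pair w a"
  by (auto simp: icop_def elim!: Ints_cases)

lemma icop_self: "(a::'v::euclidean_space) \<noteq> 0 \<Longrightarrow> icop a a = 2"
  by (simp add: icop_def coroot_pair_def)

lemma fst_aff_refl:
  "coroot_pair (fst x) a \<in> \<int> \<Longrightarrow> fst (aff_refl a n x) = root_refl a (fst x)"
  by (simp add: aff_refl_def root_refl_def of_int_icop)

lemma aff_refl_uminus:
  "coroot_pair (fst x) a \<in> \<int> \<Longrightarrow> aff_refl a n (- x) = - aff_refl a n x"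
  by (simp add: aff_refl_def icop_uminus algebra_simps)

lemma aff_refl_self: "a \<noteq> 0 \<Longrightarrow> aff_refl a n (a, n) = - (a, n)"
  by (simp add: aff_refl_def icop_self scaleR_2)

lemma aff_refl_uminus_self: "a \<noteq> 0 \<Longrightarrow> aff_refl a n (- (a, n)) = (a, n)"
  using aff_refl_uminus[of "(a, n)" a n] aff_refl_self[of a n]
  by (simp add: coroot_pair_def)

lemma root_system_uminus:
  assumes "root_system R" "\<alpha> \<in> R"
  shows "- \<alpha> \<in> R"
proof -
  have "\<alpha> \<noteq> 0" using assms by (auto simp: root_system_def)
  then have "root_refl \<alpha> \<alpha> = - \<alpha>"
    by (simp add: root_refl_def coroot_pair_def algebra_simps scaleR_2)
  with assms show ?thesis by (metis root_system_def)
qed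

lemma root_system_aff_refl:
  assumes "root_system R" "\<alpha> \<in> R" "fst x \<in> R"
  shows "fst (aff_refl \<alpha> n x) \<in> R"
  using assms by (simp add: root_system_def fst_aff_refl)

lemma lab_refl_eq_aff_refl:
  assumes "lb \<in> simple_labels B" "B \<subseteq> R" "\<gamma> \<in> R"
  obtains \<alpha> n where "\<alpha> \<in> R" "lab_refl \<gamma> lb = aff_refl \<alpha> n"
  using assms by (cases lb) (auto simp: simple_labels_def)

lemma lab_refl_lab_root:
  assumes "lb \<in> simple_labels B" "0 \<notin> B" "\<gamma> \<noteq> 0"
  shows "lab_refl \<gamma> lb (lab_root \<gamma> lb) = - lab_root \<gamma> lb"
proof (cases lb)
  case (Some \<alpha>)
  then have "\<alpha> \<noteq> 0" using assms(1,2) by (auto simp: simple_labels_def)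
  then show ?thesis using Some aff_refl_self[of \<alpha> 0] by simp
next
  case None
  then show ?thesis using aff_refl_uminus_self[OF assms(3), of 1] by simp
qed

lemma fst_lab_root_in_roots:
  assumes "root_system R" "lb \<in> simple_labels B" "B \<subseteq> R" "\<gamma> \<in> R"
  shows "fst (lab_root \<gamma> lb) \<in> R"
  using assms root_system_uminus[of R \<gamma>] by (cases lb) (auto simp: simple_labels_def)

lemma ev_Cons: "ev \<gamma> s (i # \<tau>) x = lab_refl \<gamma> (s ! (i - 1)) (ev \<gamma> s \<tau> x)"
  by (simp add: ev_def)

lemma ev_snoc: "ev \<gamma> s (\<tau> @ [i]) x = ev \<gamma> s \<tau> (lab_refl \<gamma> (s ! (i - 1)) x)"
  by (simp add: ev_def)

lemma nth_labels:
  "set s \<subseteq> simple_labels B \<Longrightarrow> i \<in> {1..length s} \<Longrightarrow> s ! (i - 1) \<in> simple_labels B"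
  by (auto intro: nth_mem)

lemma ev_in_roots_and_uminus:
  assumes R: "root_system R" "B \<subseteq> R" "\<gamma> \<in> R"
    and labels: "set s \<subseteq> simple_labels B" and \<tau>: "set \<tau> \<subseteq> {1..length s}"
    and x: "fst x \<in> R"
  shows "fst (ev \<gamma> s \<tau> x) \<in> R \<and> ev \<gamma> s \<tau> (- x) = - ev \<gamma> s \<tau> x"
  using \<tau>
proof (induction \<tau>)
  case Nil
  then show ?case using x by (simp add: ev_def)
next
  case (Cons i \<tau>)
  then have IH: "fst (ev \<gamma> s \<tau> x) \<in> R" "ev \<gamma> s \<tau> (- x) = - ev \<gamma> s \<tau> x"
    and i: "s ! (i - 1) \<in> simple_labels B"
    using nth_labels[OF labels] by auto
  obtain \<alpha> n where \<alpha>: "\<alpha> \<in> R" "lab_refl \<gamma> (s ! (i - 1)) = aff_refl \<alpha> n"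
    using lab_refl_eq_aff_refl[OF i R(2,3)] .
  have "coroot_pair (fst (ev \<gamma> s \<tau> x)) \<alpha> \<in> \<int>"
    using R(1) \<alpha>(1) IH(1) by (simp add: root_system_def)
  then show ?case
    unfolding ev_Cons \<alpha>(2) using root_system_aff_refl[OF R(1) \<alpha>(1) IH(1)] IH(2)
    by (simp add: aff_refl_uminus)
qed

lemma lin_uminus:
  assumes "\<forall>\<beta>\<in>B. coroot_pair (fst x) \<beta> \<in> \<int>"
  shows "(lin B (- x) :: ('v::euclidean_space, 'a::comm_ring_1) symalg) = - lin B x"
proof -
  have "(\<Sum>\<beta>\<in>B. of_int (icop (- fst x) \<beta>) * (pvar (Some \<beta>) :: ('v, 'a) symalg))
     = (\<Sum>\<beta>\<in>B. - (of_int (icop (fst x) \<beta>) * pvar (Some \<beta>)))"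
    using assms by (intro sum.cong) (auto simp: icop_uminus)
  then show ?thesis by (simp add: lin_def sum_negf)
qed

lemma lin_ev_snoc_lab_root:
  assumes R: "root_system R" "B \<subseteq> R" "\<gamma> \<in> R"
    and labels: "set s \<subseteq> simple_labels B" and \<tau>: "set \<tau> \<subseteq> {1..length s}"
    and i: "i \<in> {1..length s}"
  defines "r \<equiv> lab_root \<gamma> (s ! (i - 1))"
  shows "(lin B (ev \<gamma> s (\<tau> @ [i]) r) :: ('v::euclidean_space, 'a::comm_ring_1) symalg)
           = - lin B (ev \<gamma> s \<tau> r)"
proof -
  have lb: "s ! (i - 1) \<in> simple_labels B" using nth_labels[OF labels i] .
  have "0 \<notin> B" "\<gamma> \<noteq> 0" using R by (auto simp: root_system_def)
  then have "ev \<gamma> s (\<tau> @ [i]) r = ev \<gamma> s \<tau> (- r)"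
    unfolding ev_snoc r_def using lab_refl_lab_root[OF lb] by simp
  moreover have r: "fst r \<in> R"
    unfolding r_def using fst_lab_root_in_roots[OF R(1) lb R(2,3)] .
  ultimately have "ev \<gamma> s (\<tau> @ [i]) r = - ev \<gamma> s \<tau> r"
    using ev_in_roots_and_uminus[OF R labels \<tau>] by simp
  moreover have "\<forall>\<beta>\<in>B. coroot_pair (fst (ev \<gamma> s \<tau> r)) \<beta> \<in> \<int>"
    using ev_in_roots_and_uminus[OF R labels \<tau> r] R(1,2) by (auto simp: root_system_def)
  ultimately show ?thesis by (simp add: lin_uminus)
qed

lemma ev_lab_root_in_roots:
  assumes R: "root_system R" "B \<subseteq> R" "\<gamma> \<in> R"
    and "set s \<subseteq> simple_labels B" "set \<tau> \<subseteq> {1..length s}" "lb \<in> simple_labels B"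
  shows "fst (ev \<gamma> s \<tau> (lab_root \<gamma> lb)) \<in> R"
  using ev_in_roots_and_uminus[OF R assms(4,5)] fst_lab_root_in_roots[OF R(1) assms(6) R(2,3)]
  by blast

lemma affine_roots_iff: "x \<in> affine_roots R \<longleftrightarrow> fst x \<in> R"
proof
  assume "fst x \<in> R"
  then show "x \<in> affine_roots R"
    unfolding affine_roots_def by (intro CollectI exI[of _ "fst x"] exI[of _ "- snd x"]) auto
qed (auto simp: affine_roots_def)

lemma denoms_mult: "u \<in> denoms R B \<Longrightarrow> v \<in> denoms R B \<Longrightarrow> u * v \<in> denoms R B"
  by (induction u rule: denoms.induct) (auto simp: mult.assoc intro: denoms.intros)

lemma denoms_prod_lin:
  "finite A \<Longrightarrow> (\<And>\<tau>. \<tau> \<in> A \<Longrightarrow> fst (h \<tau>) \<in> R) \<Longrightarrow> (\<Prod>\<tau>\<in>A. lin B (h \<tau>)) \<in> denoms R B"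
  by (induction A rule: finite_induct) (auto intro: denoms.intros simp: affine_roots_iff)

lemma Iset_0: "Iset 0 = {[]}"
  by (auto simp: Iset_def)

lemma Iset_Suc: "\<sigma> \<in> Iset n \<Longrightarrow> \<sigma> \<in> Iset (Suc n)"
  by (auto simp: Iset_def)

lemma Iset_snoc: "\<tau> \<in> Iset n \<Longrightarrow> \<tau> @ [Suc n] \<in> Iset (Suc n)"
  by (auto simp: Iset_def sorted_wrt_append)

lemma Iset_last_le: "\<sigma> \<in> Iset n \<Longrightarrow> \<sigma> \<noteq> [] \<Longrightarrow> last \<sigma> \<le> n"
  unfolding Iset_def using last_in_set by fastforce

lemma Iset_Suc_cases:
  assumes "\<sigma> \<in> Iset (Suc n)"
  obtains "\<sigma> \<in> Iset n" | \<tau> where "\<tau> \<in> Iset n" "\<sigma> = \<tau> @ [Suc n]"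
proof (cases \<sigma> rule: rev_exhaust)
  case Nil
  then show ?thesis using that by (simp add: Iset_def)
next
  case (snoc \<tau> x)
  with assms have \<tau>: "sorted_wrt (<) \<tau>" "\<forall>y\<in>set \<tau>. y < x" "x \<le> Suc n"
    "set \<tau> \<subseteq> {1..Suc n}"
    by (auto simp: Iset_def sorted_wrt_append)
  show ?thesis
  proof (cases "x = Suc n")
    case True
    then have "\<tau> \<in> Iset n" using \<tau> by (auto simp: Iset_def subset_iff less_Suc_eq_le)
    then show ?thesis using that(2) snoc True by blast
  next
    case False
    then have "\<sigma> \<in> Iset n" using \<tau> snoc assms by (fastforce simp: Iset_def)
    then show ?thesis using that(1) by blast
  qed
qed

lemma finite_Iset: "finite (Iset n)"
proof -
  have "Iset n \<subseteq> sorted_list_of_set ` Pow {1..n}"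
  proof
    fix \<sigma> assume "\<sigma> \<in> Iset n"
    then have "\<sigma> = sorted_list_of_set (set \<sigma>)" "set \<sigma> \<in> Pow {1..n}"
      by (auto simp: Iset_def strict_sorted_iff sorted_list_of_set.idem_if_sorted_distinct)
    then show "\<sigma> \<in> sorted_list_of_set ` Pow {1..n}" by blast
  qed
  then show ?thesis by (rule finite_subset) simp
qed

lemma Delta_outside: "\<sigma> \<notin> Iset l \<Longrightarrow> Delta l z \<sigma> = 0"
  by (simp add: Delta_def)

lemma Delta_old: "\<sigma> \<in> Iset n \<Longrightarrow> Delta (Suc n) z \<sigma> = z \<sigma>"
  using Iset_last_le[of \<sigma> n] by (auto simp: Delta_def Iset_Suc)

lemma Delta_snoc: "\<tau> \<in> Iset n \<Longrightarrow> Delta (Suc n) z (\<tau> @ [Suc n]) = z \<tau>"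
  by (simp add: Delta_def Iset_snoc)

definition Xcons :: "'v::euclidean_space set \<Rightarrow> 'v \<Rightarrow> 'v option \<Rightarrow> 'v option list
    \<Rightarrow> (nat list \<Rightarrow> ('v, 'a::comm_ring_1) symalg) \<Rightarrow> (nat list \<Rightarrow> ('v, 'a) symalg)
    \<Rightarrow> nat list \<Rightarrow> ('v, 'a) symalg" where
  "Xcons B \<gamma> t rs z z' \<sigma> = Delta (Suc (length rs)) z \<sigma>
     + cmul B \<gamma> (rev (t # rs)) (lab_root \<gamma> t) (Delta (Suc (length rs)) z') \<sigma>"

lemma Xrev_Cons:
  "Xrev B \<gamma> (t # rs) = {Xcons B \<gamma> t rs z z' | z z'. z \<in> Xrev B \<gamma> rs \<and> z' \<in> Xrev B \<gamma> rs}"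
  by (simp add: Xcons_def[abs_def] Let_def)

declare Xrev.simps(2) [simp del]

lemma Xcons_mult_left:
  "Xcons B \<gamma> t rs (\<lambda>\<sigma>. c * z \<sigma>) (\<lambda>\<sigma>. c * z' \<sigma>) = (\<lambda>\<sigma>. c * Xcons B \<gamma> t rs z z' \<sigma>)"
  by (rule ext) (simp add: Xcons_def Delta_def cmul_def algebra_simps)

lemma Xcons_outside: "\<sigma> \<notin> Iset (Suc (length rs)) \<Longrightarrow> Xcons B \<gamma> t rs z z' \<sigma> = 0"
  by (simp add: Xcons_def Delta_outside cmul_def)

lemma Xcons_old:
  "\<sigma> \<in> Iset (length rs) \<Longrightarrow>
     Xcons B \<gamma> t rs z z' \<sigma> = z \<sigma> + lin B (ev \<gamma> (rev (t # rs)) \<sigma> (lab_root \<gamma> t)) * z' \<sigma>"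
  by (simp add: Xcons_def Delta_old cmul_def)

lemma Xcons_snoc:
  fixes z z' :: "nat list \<Rightarrow> ('v::euclidean_space, 'a::comm_ring_1) symalg"
  assumes "root_system R" "B \<subseteq> R" "\<gamma> \<in> R" "set (t # rs) \<subseteq> simple_labels B"
    and "\<tau> \<in> Iset (length rs)"
  shows "Xcons B \<gamma> t rs z z' (\<tau> @ [Suc (length rs)])
           = z \<tau> - lin B (ev \<gamma> (rev (t # rs)) \<tau> (lab_root \<gamma> t)) * z' \<tau>"
proof -
  have "set (rev (t # rs)) \<subseteq> simple_labels B" "set \<tau> \<subseteq> {1..length (rev (t # rs))}"
    "Suc (length rs) \<in> {1..length (rev (t # rs))}" "rev (t # rs) ! (Suc (length rs) - 1) = t"
    using assms(4,5) by (auto simp: Iset_def nth_append)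
  then have "(lin B (ev \<gamma> (rev (t # rs)) (\<tau> @ [Suc (length rs)]) (lab_root \<gamma> t)) :: ('v, 'a) symalg)
      = - lin B (ev \<gamma> (rev (t # rs)) \<tau> (lab_root \<gamma> t))"
    using lin_ev_snoc_lab_root[OF assms(1-3), of "rev (t # rs)" \<tau> "Suc (length rs)"] by simp
  then show ?thesis
    using assms(5) by (simp add: Xcons_def Delta_snoc cmul_def)
qed

lemma Xrev_mult_left: "h \<in> Xrev B \<gamma> rs \<Longrightarrow> (\<lambda>\<sigma>. c * h \<sigma>) \<in> Xrev B \<gamma> rs"
proof (induction rs arbitrary: h)
  case Nil
  then show ?case by simp
next
  case (Cons t rs)
  then obtain z z' where z: "z \<in> Xrev B \<gamma> rs" "z' \<in> Xrev B \<gamma> rs"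
    and h: "h = Xcons B \<gamma> t rs z z'"
    by (auto simp: Xrev_Cons)
  have "Xcons B \<gamma> t rs (\<lambda>\<sigma>. c * z \<sigma>) (\<lambda>\<sigma>. c * z' \<sigma>) \<in> Xrev B \<gamma> (t # rs)"
    using Cons.IH z by (auto simp: Xrev_Cons)
  then show ?case by (simp add: h Xcons_mult_left)
qed

lemma Xrev_subset_dirsum: "Xrev B \<gamma> rs \<subseteq> dirsum (length rs)"
  by (cases rs) (auto simp: Xrev_Cons dirsum_def Xcons_outside Iset_0)

lemma prod_recombine:
  fixes a :: "'i \<Rightarrow> 'b::comm_ring_1"
  assumes "finite I" "\<sigma> \<in> I"
  shows "(x + y) * prod a I + a \<sigma> * ((x - y) * prod a (I - {\<sigma>})) = 2 * prod a I * x"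
    and "(x + y) * prod a I - a \<sigma> * ((x - y) * prod a (I - {\<sigma>})) = 2 * prod a I * y"
proof -
  have P: "prod a I = a \<sigma> * prod a (I - {\<sigma>})" using prod.remove[OF assms] .
  have "(x + y) * (c * q) + c * ((x - y) * q) = 2 * (c * q) * x"
    and "(x + y) * (c * q) - c * ((x - y) * q) = 2 * (c * q) * y" for c q :: 'b
    by (simp_all add: algebra_simps mult_2)
  from this[of "a \<sigma>" "prod a (I - {\<sigma>})"]
  show "(x + y) * prod a I + a \<sigma> * ((x - y) * prod a (I - {\<sigma>})) = 2 * prod a I * x"
    and "(x + y) * prod a I - a \<sigma> * ((x - y) * prod a (I - {\<sigma>})) = 2 * prod a I * y"
    unfolding P by blast+
qed

lemma Xcons_solve:
  fixes f :: "nat list \<Rightarrow> ('v::euclidean_space, 'a::comm_ring_1) symalg"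
  assumes R: "root_system R" "B \<subseteq> R" "\<gamma> \<in> R"
    and labels: "set (t # rs) \<subseteq> simple_labels B"
    and f: "f \<in> dirsum (length (t # rs))"
  obtains P g g' where "P \<in> denoms R B" "g \<in> dirsum (length rs)" "g' \<in> dirsum (length rs)"
    and "Xcons B \<gamma> t rs g g' = (\<lambda>\<sigma>. P * f \<sigma>)"
proof -
  define n where "n = length rs"
  define I where "I = Iset n"
  define a :: "nat list \<Rightarrow> ('v, 'a) symalg"
    where "a \<tau> = lin B (ev \<gamma> (rev (t # rs)) \<tau> (lab_root \<gamma> t))" for \<tau>
  define P where "P = (\<Prod>\<tau>\<in>I. a \<tau>)"
  \<comment> \<open>Cramer's rule for \<open>z\<^sub>\<tau> \<plusminus> a\<^sub>\<tau> z'\<^sub>\<tau> = f\<^sub>\<tau>, f\<^sub>\<tau>\<^sub>s\<^sub>l\<close>, with \<open>2P\<close> in place of the determinant.\<close>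
  define g where "g \<sigma> = (if \<sigma> \<in> I then (f \<sigma> + f (\<sigma> @ [Suc n])) * P else 0)" for \<sigma>
  define g' where
    "g' \<sigma> = (if \<sigma> \<in> I then (f \<sigma> - f (\<sigma> @ [Suc n])) * (\<Prod>\<tau>\<in>I - {\<sigma>}. a \<tau>) else 0)" for \<sigma>
  have finI: "finite I" by (simp add: I_def finite_Iset)
  have "Xcons B \<gamma> t rs g g' \<sigma> = 2 * P * f \<sigma>" for \<sigma>
  proof -
    consider "\<sigma> \<notin> Iset (Suc n)" | "\<sigma> \<in> I" | \<tau> where "\<tau> \<in> I" "\<sigma> = \<tau> @ [Suc n]"
      unfolding I_def by (metis Iset_Suc_cases)
    then show ?thesis
    proof cases
      case 1
      then show ?thesis using f by (simp add: Xcons_outside dirsum_def n_def)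
    next
      case 2
      then show ?thesis
        using prod_recombine(1)[OF finI 2]
        by (simp add: Xcons_old I_def n_def a_def g_def g'_def P_def)
    next
      case 3
      have "Xcons B \<gamma> t rs g g' \<sigma> = g \<tau> - a \<tau> * g' \<tau>"
        unfolding 3(2) n_def Xcons_snoc[OF R labels 3(1)[unfolded I_def n_def]] a_def ..
      then show ?thesis
        using prod_recombine(2)[OF finI 3(1)] 3 by (simp add: g_def g'_def P_def)
    qed
  qed
  moreover have "2 * P \<in> denoms R B"
  proof -
    have "fst (ev \<gamma> (rev (t # rs)) \<tau> (lab_root \<gamma> t)) \<in> R" if "\<tau> \<in> I" for \<tau>
    proof -
      have "set \<tau> \<subseteq> {1..length (rev (t # rs))}"
        using that by (auto simp: I_def Iset_def n_def)
      then show ?thesis using labels ev_lab_root_in_roots[OF R, of "rev (t # rs)" \<tau> t] by simp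
    qed
    then show ?thesis
      unfolding P_def a_def by (intro denoms.two denoms_prod_lin finI) simp
  qed
  moreover have "g \<in> dirsum (length rs)" "g' \<in> dirsum (length rs)"
    by (simp_all add: dirsum_def g_def g'_def I_def n_def)
  ultimately show ?thesis using that[of "2 * P" g g'] by blast
qed

text \<open>\<open>U\<^sup>-\<^sup>1M = U\<^sup>-\<^sup>1D\<close>, witnessed by clearing denominators.\<close>
definition loc_onto :: "('b::comm_ring_1) set \<Rightarrow> ('i \<Rightarrow> 'b) set \<Rightarrow> ('i \<Rightarrow> 'b) set \<Rightarrow> bool" where
  "loc_onto U M D \<longleftrightarrow> (\<forall>f\<in>D. \<exists>u\<in>U. (\<lambda>\<sigma>. u * f \<sigma>) \<in> M)"

lemma loc_iso_if_loc_onto: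
  assumes "M \<subseteq> D" "loc_onto U M D" "1 \<in> U" "\<And>u v. u \<in> U \<Longrightarrow> v \<in> U \<Longrightarrow> u * v \<in> U"
  shows "loc_iso U M D"
  unfolding loc_iso_def
proof (intro conjI ballI)
  fix f v assume "f \<in> D" "v \<in> U"
  with assms(2) obtain u where u: "u \<in> U" "(\<lambda>\<sigma>. u * f \<sigma>) \<in> M"
    by (auto simp: loc_onto_def)
  have "\<forall>\<sigma>. 1 * (v * (u * f \<sigma>) - v * u * f \<sigma>) = 0"
    by (simp add: mult.assoc)
  moreover have "v * u \<in> U" using \<open>v \<in> U\<close> u(1) assms(4) by blast
  ultimately show "\<exists>m\<in>M. \<exists>u\<in>U. \<exists>t\<in>U. \<forall>\<sigma>. t * (v * m \<sigma> - u * f \<sigma>) = 0"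
    using u(2) assms(3) by fastforce
qed (use assms(1) in blast)

lemma loc_onto_Xrev_Cons:
  assumes R: "root_system R" "B \<subseteq> R" "\<gamma> \<in> R"
    and labels: "set (t # rs) \<subseteq> simple_labels B"
    and IH: "loc_onto (denoms R B :: ('v::euclidean_space, 'a::comm_ring_1) symalg set)
               (Xrev B \<gamma> rs) (dirsum (length rs))"
  shows "loc_onto (denoms R B :: ('v, 'a) symalg set) (Xrev B \<gamma> (t # rs)) (dirsum (length (t # rs)))"
  unfolding loc_onto_def
proof
  fix f :: "nat list \<Rightarrow> ('v, 'a) symalg" assume "f \<in> dirsum (length (t # rs))"
  then obtain P g g' where P: "P \<in> denoms R B"
    and g: "g \<in> dirsum (length rs)" "g' \<in> dirsum (length rs)"
    and f: "Xcons B \<gamma> t rs g g' = (\<lambda>\<sigma>. P * f \<sigma>)"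
    using Xcons_solve[OF R labels] by metis
  from g IH obtain u u' where u: "u \<in> denoms R B" "u' \<in> denoms R B"
    and z: "(\<lambda>\<sigma>. u * g \<sigma>) \<in> Xrev B \<gamma> rs" "(\<lambda>\<sigma>. u' * g' \<sigma>) \<in> Xrev B \<gamma> rs"
    unfolding loc_onto_def by meson
  from Xrev_mult_left[OF z(1), of u'] Xrev_mult_left[OF z(2), of u]
  have "Xcons B \<gamma> t rs (\<lambda>\<sigma>. u * u' * g \<sigma>) (\<lambda>\<sigma>. u * u' * g' \<sigma>) \<in> Xrev B \<gamma> (t # rs)"
    by (auto simp: Xrev_Cons ac_simps)
  then have "(\<lambda>\<sigma>. u * u' * P * f \<sigma>) \<in> Xrev B \<gamma> (t # rs)"
    by (simp add: Xcons_mult_left f mult.assoc)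
  moreover have "u * u' * P \<in> denoms R B" using u P by (intro denoms_mult)
  ultimately show "\<exists>v\<in>denoms R B. (\<lambda>\<sigma>. v * f \<sigma>) \<in> Xrev B \<gamma> (t # rs)" by blast
qed

lemma loc_onto_Xrev:
  assumes "root_system R" "B \<subseteq> R" "\<gamma> \<in> R" "set rs \<subseteq> simple_labels B"
  shows "loc_onto (denoms R B :: ('v::euclidean_space, 'a::comm_ring_1) symalg set)
           (Xrev B \<gamma> rs) (dirsum (length rs))"
  using assms(4)
proof (induction rs)
  case Nil
  have "(\<lambda>\<sigma>. 1 * f \<sigma>) \<in> Xrev B \<gamma> []" if "f \<in> dirsum 0" for f :: "nat list \<Rightarrow> ('v, 'a) symalg"
    using that by (auto simp: dirsum_def Iset_0)
  then show ?case unfolding loc_onto_def using denoms.one by fastforce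
next
  case (Cons t rs)
  then show ?case using loc_onto_Xrev_Cons[OF assms(1-3)] by simp
qed

theorem lemma6p3:
  fixes R B :: "'v::euclidean_space set" and \<gamma> :: 'v
    and s :: "'v option list"
  assumes "root_system R" and "reduced_rs R" and "irreducible_rs R"
    and "is_base R B" and "highest_root R B \<gamma>"
    and "\<forall>x::'a::idom. 2 * x = 0 \<longrightarrow> x = 0"
    and "\<forall>a\<in>affine_roots R. (lin B a :: ('v, 'a) symalg) \<noteq> 0"
    and "set s \<subseteq> simple_labels B"
  shows "loc_iso (denoms R B :: ('v, 'a) symalg set) (Xmod B \<gamma> s) (dirsum (length s))"
proof -
  have "B \<subseteq> R" using assms(4) by (simp add: is_base_def)
  moreover have "\<gamma> \<in> R" using assms(5) by (simp add: highest_root_def)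
  ultimately have "loc_onto (denoms R B :: ('v, 'a) symalg set) (Xmod B \<gamma> s) (dirsum (length s))"
    using loc_onto_Xrev[OF assms(1), of B \<gamma> "rev s"] assms(8) by (simp add: Xmod_def)
  then show ?thesis
    using Xrev_subset_dirsum[of B \<gamma> "rev s"]
    by (intro loc_iso_if_loc_onto) (auto simp: Xmod_def denoms.one denoms_mult)
qed

end
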